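(* Let $\nabla$ be a torsion-free connection on a surface $\Sigma$ whose Ricci tensor $\rho$ is skew-symmetric and nonzero everywhere. For any $1$-form $\xi$ on $\Sigma$, setting $\tau=\mathcal{L}\xi$, we have a) $Q^*\xi=\mathcal{Z}\tau$, and b) $\nabla\xi=\tau+[\xi(w)-2\mathcal{D}(\mathcal{B}\tau)]\,\rho/4$.
   Context: All objects are $C^\infty$. Killing operator: $(\mathcal{L}\xi)(u,v)=\tfrac12[(\nabla_u\xi)(v)+(\nabla_v\xi)(u)]$. $\nabla\xi$ denotes the 2-tensor $(u,v)\mapsto(\nabla_u\xi)(v)$. Since $\rho$ trivializes $\Lambda^2T^*\Sigma$, there is a unique 1-form $\phi$ with $\nabla_v\rho=\phi(v)\rho$ for all $v$, and a unique vector field $w$ with $\phi=\rho(w,\cdot)$. $Q:T\Sigma\to T\Sigma$ is the bundle morphism $Q(v)=4v+\nabla_v w+\tfrac34\phi(v)w$, and $Q^*$ is its dual, $Q^*\xi=\xi\circ Q$. For a symmetric 2-tensor $\tau$, $d^\nabla\tau$ is the 3-tensor $(d^\nabla\tau)(u,v,x)=(\nabla_u\tau)(v,x)-(\nabla_v\tau)(u,x)$, and $\mathcal{B}\tau$ is the 1-form with $[(\mathcal{B}\tau)(v)]\rho=(d^\nabla\tau)(\cdot,\cdot,v)$. For a 1-form $\xi$, $\mathcal{D}\xi$ is the function with $2(\mathcal{D}\xi)\rho=\xi\wedge\phi-d\xi$, where $(\xi\wedge\phi)(u,v)=\xi(u)\phi(v)-\phi(u)\xi(v)$ and $d\xi(u,v)=u(\xi(v))-v(\xi(u))-\xi([u,v])$.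 Finally $\mathcal{Z}\tau=2\,d[\mathcal{D}(\mathcal{B}\tau)]+4\mathcal{B}\tau-\tau(w,\cdot)+\tfrac32[\mathcal{D}(\mathcal{B}\tau)]\phi$. *)

theory Defs
  imports "HOL-Analysis.Analysis"
begin

text \<open>Local coordinate rendering on an open set U of the plane (a chart of the surface).
  Points are real^2; tensor indices range over the type 2.
  Gamma k i j = Christoffel symbol with nabla_{d_i} d_j = sum_k Gamma k i j d_k.\<close>

type_synonym pt = "real ^ 2"

definition pd :: "2 \<Rightarrow> (pt \<Rightarrow> real) \<Rightarrow> pt \<Rightarrow> real" where
  "pd i f p = frechet_derivative f (at p) (axis i 1)"

fun dpart :: "2 list \<Rightarrow> (pt \<Rightarrow> real) \<Rightarrow> pt \<Rightarrow> real" where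
  "dpart [] f = f"
| "dpart (i # is) f = pd i (dpart is f)"

definition smooth_on :: "pt set \<Rightarrow> (pt \<Rightarrow> real) \<Rightarrow> bool" where
  "smooth_on U f \<longleftrightarrow> (\<forall>is. \<forall>p\<in>U. dpart is f differentiable (at p))"

definition cov1 :: "(2 \<Rightarrow> 2 \<Rightarrow> 2 \<Rightarrow> pt \<Rightarrow> real) \<Rightarrow> (2 \<Rightarrow> pt \<Rightarrow> real) \<Rightarrow> 2 \<Rightarrow> 2 \<Rightarrow> pt \<Rightarrow> real" where
  "cov1 \<Gamma> \<xi> i j p = pd i (\<xi> j) p - (\<Sum>k\<in>UNIV. \<Gamma> k i j p * \<xi> k p)"

definition covvec :: "(2 \<Rightarrow> 2 \<Rightarrow> 2 \<Rightarrow> pt \<Rightarrow> real) \<Rightarrow> (2 \<Rightarrow> pt \<Rightarrow> real) \<Rightarrow> 2 \<Rightarrow> 2 \<Rightarrow> pt \<Rightarrow> real" where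
  "covvec \<Gamma> v i k p = pd i (v k) p + (\<Sum>j\<in>UNIV. \<Gamma> k i j p * v j p)"

definition cov2 :: "(2 \<Rightarrow> 2 \<Rightarrow> 2 \<Rightarrow> pt \<Rightarrow> real) \<Rightarrow> (2 \<Rightarrow> 2 \<Rightarrow> pt \<Rightarrow> real) \<Rightarrow> 2 \<Rightarrow> 2 \<Rightarrow> 2 \<Rightarrow> pt \<Rightarrow> real" where
  "cov2 \<Gamma> \<tau> i j l p = pd i (\<tau> j l) p - (\<Sum>k\<in>UNIV. \<Gamma> k i j p * \<tau> k l p)
                         - (\<Sum>k\<in>UNIV. \<Gamma> k i l p * \<tau> j k p)"

text \<open>Curvature R(d_i,d_j)d_k = sum_l curv l k i j d_l, where
  R(u,v) = nabla_u nabla_v - nabla_v nabla_u - nabla_[u,v].\<close>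
definition curv :: "(2 \<Rightarrow> 2 \<Rightarrow> 2 \<Rightarrow> pt \<Rightarrow> real) \<Rightarrow> 2 \<Rightarrow> 2 \<Rightarrow> 2 \<Rightarrow> 2 \<Rightarrow> pt \<Rightarrow> real" where
  "curv \<Gamma> l k i j p = pd i (\<Gamma> l j k) p - pd j (\<Gamma> l i k) p
     + (\<Sum>m\<in>UNIV. \<Gamma> l i m p * \<Gamma> m j k p - \<Gamma> l j m p * \<Gamma> m i k p)"

text \<open>Ricci tensor rho(v,x) = trace(u |-> R(u,v)x).\<close>
definition ricci :: "(2 \<Rightarrow> 2 \<Rightarrow> 2 \<Rightarrow> pt \<Rightarrow> real) \<Rightarrow> 2 \<Rightarrow> 2 \<Rightarrow> pt \<Rightarrow> real" where
  "ricci \<Gamma> j k p = (\<Sum>i\<in>UNIV. curv \<Gamma> i k i j p)"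

definition killing :: "(2 \<Rightarrow> 2 \<Rightarrow> 2 \<Rightarrow> pt \<Rightarrow> real) \<Rightarrow> (2 \<Rightarrow> pt \<Rightarrow> real) \<Rightarrow> 2 \<Rightarrow> 2 \<Rightarrow> pt \<Rightarrow> real" where
  "killing \<Gamma> \<xi> i j p = (cov1 \<Gamma> \<xi> i j p + cov1 \<Gamma> \<xi> j i p) / 2"

definition phi :: "(2 \<Rightarrow> 2 \<Rightarrow> 2 \<Rightarrow> pt \<Rightarrow> real) \<Rightarrow> 2 \<Rightarrow> pt \<Rightarrow> real" where
  "phi \<Gamma> i p = (THE c. \<forall>j k. cov2 \<Gamma> (ricci \<Gamma>) i j k p = c * ricci \<Gamma> j k p)"

definition wvec :: "(2 \<Rightarrow> 2 \<Rightarrow> 2 \<Rightarrow> pt \<Rightarrow> real) \<Rightarrow> 2 \<Rightarrow> pt \<Rightarrow> real" where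
  "wvec \<Gamma> k p = (THE v :: 2 \<Rightarrow> real. \<forall>j. phi \<Gamma> j p = (\<Sum>i\<in>UNIV. ricci \<Gamma> i j p * v i)) k"

text \<open>Q^* xi, where Q(v) = 4v + nabla_v w + (3/4) phi(v) w.\<close>
definition Qstar :: "(2 \<Rightarrow> 2 \<Rightarrow> 2 \<Rightarrow> pt \<Rightarrow> real) \<Rightarrow> (2 \<Rightarrow> pt \<Rightarrow> real) \<Rightarrow> 2 \<Rightarrow> pt \<Rightarrow> real" where
  "Qstar \<Gamma> \<xi> i p = 4 * \<xi> i p + (\<Sum>k\<in>UNIV. \<xi> k p * covvec \<Gamma> (wvec \<Gamma>) i k p)
      + 3/4 * phi \<Gamma> i p * (\<Sum>k\<in>UNIV. \<xi> k p * wvec \<Gamma> k p)"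

definition dnabla :: "(2 \<Rightarrow> 2 \<Rightarrow> 2 \<Rightarrow> pt \<Rightarrow> real) \<Rightarrow> (2 \<Rightarrow> 2 \<Rightarrow> pt \<Rightarrow> real) \<Rightarrow> 2 \<Rightarrow> 2 \<Rightarrow> 2 \<Rightarrow> pt \<Rightarrow> real" where
  "dnabla \<Gamma> \<tau> i j l p = cov2 \<Gamma> \<tau> i j l p - cov2 \<Gamma> \<tau> j i l p"

definition Bop :: "(2 \<Rightarrow> 2 \<Rightarrow> 2 \<Rightarrow> pt \<Rightarrow> real) \<Rightarrow> (2 \<Rightarrow> 2 \<Rightarrow> pt \<Rightarrow> real) \<Rightarrow> 2 \<Rightarrow> pt \<Rightarrow> real" where
  "Bop \<Gamma> \<tau> l p = (THE c. \<forall>i j. c * ricci \<Gamma> i j p = dnabla \<Gamma> \<tau> i j l p)"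

definition wedge1 :: "(2 \<Rightarrow> pt \<Rightarrow> real) \<Rightarrow> (2 \<Rightarrow> pt \<Rightarrow> real) \<Rightarrow> 2 \<Rightarrow> 2 \<Rightarrow> pt \<Rightarrow> real" where
  "wedge1 \<xi> \<eta> i j p = \<xi> i p * \<eta> j p - \<eta> i p * \<xi> j p"

text \<open>Exterior derivative of a 1-form (coordinate vector fields commute).\<close>
definition dform :: "(2 \<Rightarrow> pt \<Rightarrow> real) \<Rightarrow> 2 \<Rightarrow> 2 \<Rightarrow> pt \<Rightarrow> real" where
  "dform \<xi> i j p = pd i (\<xi> j) p - pd j (\<xi> i) p"

definition Dop :: "(2 \<Rightarrow> 2 \<Rightarrow> 2 \<Rightarrow> pt \<Rightarrow> real) \<Rightarrow> (2 \<Rightarrow> pt \<Rightarrow> real) \<Rightarrow> pt \<Rightarrow> real" where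
  "Dop \<Gamma> \<xi> p = (THE c. \<forall>i j. 2 * c * ricci \<Gamma> i j p = wedge1 \<xi> (phi \<Gamma>) i j p - dform \<xi> i j p)"

definition Zop :: "(2 \<Rightarrow> 2 \<Rightarrow> 2 \<Rightarrow> pt \<Rightarrow> real) \<Rightarrow> (2 \<Rightarrow> 2 \<Rightarrow> pt \<Rightarrow> real) \<Rightarrow> 2 \<Rightarrow> pt \<Rightarrow> real" where
  "Zop \<Gamma> \<tau> i p = 2 * pd i (Dop \<Gamma> (Bop \<Gamma> \<tau>)) p + 4 * Bop \<Gamma> \<tau> i p
      - (\<Sum>k\<in>UNIV. \<tau> k i p * wvec \<Gamma> k p) + 3/2 * Dop \<Gamma> (Bop \<Gamma> \<tau>) p * phi \<Gamma> i p"

end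

theory Submission
  imports Defs
begin

text \<open>In dimension two a nowhere vanishing skew \<open>\<rho>\<close> spans the skew-symmetric 2-tensors at every
  point, so each of \<open>\<phi>\<close>, \<open>w\<close>, \<open>\<B>\<close>, \<open>\<D>\<close> is computed from a single component. Write
  \<open>\<nabla>\<xi> = \<tau> + f \<rho>\<close>, so that \<open>d\<xi> = 2 f \<rho>\<close>. The Ricci identity for \<open>\<xi>\<close> together with
  \<open>\<nabla>\<rho> = \<phi> \<rho>\<close> gives \<open>\<B>\<tau> = \<xi> + df + f \<phi>\<close>, and then \<open>d\<phi> = 2 \<rho>\<close> and \<open>d(df) = 0\<close> give
  \<open>\<D>(\<B>\<tau>) = \<xi>(w)/2 - 2 f\<close>, which is b). Substituting these formulas into \<open>\<Z>\<tau>\<close> turns a) into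
  an algebraic identity. The symmetry of second partial derivatives, used for the Ricci identity
  and for \<open>d(df) = 0\<close>, is derived from the mean value theorem.\<close>

lemma pd_has_derivative:
  assumes "(f has_derivative f') (at p)"
  shows "pd i f p = f' (axis i 1)"
  using frechet_derivative_at[OF assms] by (simp add: pd_def)

lemma pd_add:
  assumes "f differentiable at p" "g differentiable at p"
  shows "pd i (\<lambda>x. f x + g x) p = pd i f p + pd i g p"
proof -
  obtain f' g' where f: "(f has_derivative f') (at p)" and g: "(g has_derivative g') (at p)"
    using assms unfolding differentiable_def by blast
  show ?thesis
    using pd_has_derivative[OF has_derivative_add[OF f g]] pd_has_derivative[OF f] pd_has_derivative[OF g]
    by simp
qed

lemma pd_diff:
  assumes "f differentiable at p" "g differentiable at p"
  shows "pd i (\<lambda>x. f x - g x) p = pd i f p - pd i g p"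
proof -
  obtain f' g' where f: "(f has_derivative f') (at p)" and g: "(g has_derivative g') (at p)"
    using assms unfolding differentiable_def by blast
  show ?thesis
    using pd_has_derivative[OF has_derivative_diff[OF f g]] pd_has_derivative[OF f] pd_has_derivative[OF g]
    by simp
qed

lemma pd_mult:
  assumes "f differentiable at p" "g differentiable at p"
  shows "pd i (\<lambda>x. f x * g x) p = pd i f p * g p + f p * pd i g p"
proof -
  obtain f' g' where f: "(f has_derivative f') (at p)" and g: "(g has_derivative g') (at p)"
    using assms unfolding differentiable_def by blast
  have "((\<lambda>x. f x * g x) has_derivative (\<lambda>h. f p * g' h + f' h * g p)) (at p)"
    using has_derivative_mult[OF f g] by simp
  then show ?thesis
    using pd_has_derivative[of _ _ p i] pd_has_derivative[OF f, of i] pd_has_derivative[OF g, of i]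
    by simp
qed

lemma pd_const [simp]: "pd i (\<lambda>x. c) p = 0"
  by (simp add: pd_def)

lemma pd_cmult: "f differentiable at p \<Longrightarrow> pd i (\<lambda>x. c * f x) p = c * pd i f p"
  using pd_mult[of "\<lambda>x. c" p f i] by simp

lemma pd_divide_const: "f differentiable at p \<Longrightarrow> pd i (\<lambda>x. f x / c) p = pd i f p / c"
  using pd_cmult[of f p i "1/c"] by simp

lemma pd_divide:
  assumes "f differentiable at p" "g differentiable at p" "g p \<noteq> 0"
  shows "pd i (\<lambda>x. f x / g x) p = (pd i f p * g p - f p * pd i g p) / (g p)\<^sup>2"
proof -
  obtain f' g' where f: "(f has_derivative f') (at p)" and g: "(g has_derivative g') (at p)"
    using assms unfolding differentiable_def by blast
  have "pd i (\<lambda>x. f x / g x) p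
        = - f p * (inverse (g p) * g' (axis i 1) * inverse (g p)) + f' (axis i 1) / g p"
    using pd_has_derivative[OF has_derivative_divide[OF f g \<open>g p \<noteq> 0\<close>]] .
  with pd_has_derivative[OF f, of i] pd_has_derivative[OF g, of i] \<open>g p \<noteq> 0\<close> show ?thesis
    by (simp add: field_simps power2_eq_square)
qed

lemma has_derivative_cong_open:
  assumes "open U" "p \<in> U" "\<forall>q\<in>U. f q = g q" "(f has_derivative D) (at p)"
  shows "(g has_derivative D) (at p)"
  by (rule has_derivative_transform_within_open[OF assms(4,1,2)]) (use assms(3) in blast)

lemma differentiable_cong_open:
  assumes "open U" "p \<in> U" "\<forall>q\<in>U. f q = g q" "f differentiable at p"
  shows "g differentiable at p"
  using assms has_derivative_cong_open unfolding differentiable_def by blast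

lemma pd_cong_open:
  assumes "open U" "p \<in> U" "\<forall>q\<in>U. f q = g q"
  shows "pd i f p = pd i g p"
proof -
  have "(f has_derivative D) (at p) \<longleftrightarrow> (g has_derivative D) (at p)" for D
    using has_derivative_cong_open[OF assms(1,2), of f g D] has_derivative_cong_open[OF assms(1,2), of g f D]
      assms(3) by auto
  then show ?thesis unfolding pd_def frechet_derivative_def by simp
qed

lemma dpart_append: "dpart (is @ js) f = dpart is (dpart js f)"
  by (induction "is") auto

lemma dpart_cong_open:
  assumes "open U" "\<forall>q\<in>U. f q = g q"
  shows "\<forall>q\<in>U. dpart is f q = dpart is g q"
proof (induction "is")
  case (Cons i "is")
  then show ?case using pd_cong_open[OF assms(1)] by simp
qed (simp add: assms(2))

definition differentiable_upto :: "nat \<Rightarrow> pt set \<Rightarrow> (pt \<Rightarrow> real) \<Rightarrow> bool" where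
  "differentiable_upto n U f \<longleftrightarrow> (\<forall>is. length is \<le> n \<longrightarrow> (\<forall>p\<in>U. dpart is f differentiable at p))"

lemma smooth_on_iff_differentiable_upto: "smooth_on U f \<longleftrightarrow> (\<forall>n. differentiable_upto n U f)"
  unfolding smooth_on_def differentiable_upto_def by blast

lemma differentiable_upto_cong_open:
  assumes "differentiable_upto n U f" "open U" "\<forall>q\<in>U. f q = g q"
  shows "differentiable_upto n U g"
  using assms(1) assms(2)[unfolded differentiable_upto_def] differentiable_cong_open dpart_cong_open[OF assms(2,3)]
  unfolding differentiable_upto_def by blast

lemma differentiable_upto_pd: "differentiable_upto (Suc n) U f \<Longrightarrow> differentiable_upto n U (pd i f)"
proof -
  assume f: "differentiable_upto (Suc n) U f"
  have "dpart is (pd i f) = dpart (is @ [i]) f" for "is"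
    by (simp add: dpart_append)
  with f show ?thesis unfolding differentiable_upto_def by (metis length_append_singleton not_less_eq_eq)
qed

lemma differentiable_upto_Suc_imp: "differentiable_upto (Suc n) U f \<Longrightarrow> differentiable_upto n U f"
  unfolding differentiable_upto_def by simp

lemma differentiable_upto_differentiable: "differentiable_upto n U f \<Longrightarrow> p \<in> U \<Longrightarrow> f differentiable at p"
  unfolding differentiable_upto_def by (metis dpart.simps(1) le0 list.size(3))

lemma differentiable_upto_SucI:
  assumes "\<And>i. differentiable_upto n U (pd i f)" "\<And>p. p \<in> U \<Longrightarrow> f differentiable at p"
  shows "differentiable_upto (Suc n) U f"
  unfolding differentiable_upto_def
proof (intro allI impI ballI)
  fix "is" :: "2 list" and p assume "length is \<le> Suc n" "p \<in> U"
  then show "dpart is f differentiable at p"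
    using assms unfolding differentiable_upto_def
    by (cases "is" rule: rev_exhaust) (auto simp: dpart_append)
qed

lemma differentiable_upto_add_mult:
  assumes "open U"
  shows "differentiable_upto n U f \<Longrightarrow> differentiable_upto n U g \<Longrightarrow> differentiable_upto n U (\<lambda>x. f x + g x) \<and> differentiable_upto n U (\<lambda>x. f x * g x)"
proof (induction n arbitrary: f g)
  case 0
  then show ?case unfolding differentiable_upto_def by (simp add: differentiable_upto_differentiable[OF 0(1)] differentiable_upto_differentiable[OF 0(2)])
next
  case (Suc n)
  have df: "\<And>p. p \<in> U \<Longrightarrow> f differentiable at p" and dg: "\<And>p. p \<in> U \<Longrightarrow> g differentiable at p"
    using differentiable_upto_differentiable Suc.prems by blast+
  have "differentiable_upto (Suc n) U (\<lambda>x. f x + g x)"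
  proof (rule differentiable_upto_SucI)
    fix i
    have "differentiable_upto n U (\<lambda>x. pd i f x + pd i g x)"
      using Suc.IH differentiable_upto_pd Suc.prems by blast
    then show "differentiable_upto n U (pd i (\<lambda>x. f x + g x))"
      by (rule differentiable_upto_cong_open[OF _ assms]) (simp add: pd_add df dg)
  qed (simp add: df dg)
  moreover have "differentiable_upto (Suc n) U (\<lambda>x. f x * g x)"
  proof (rule differentiable_upto_SucI)
    fix i
    have "differentiable_upto n U (\<lambda>x. pd i f x * g x)" "differentiable_upto n U (\<lambda>x. f x * pd i g x)"
      using Suc.IH differentiable_upto_pd differentiable_upto_Suc_imp Suc.prems by blast+
    then have "differentiable_upto n U (\<lambda>x. pd i f x * g x + f x * pd i g x)"
      using Suc.IH by blast
    then show "differentiable_upto n U (pd i (\<lambda>x. f x * g x))"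
      by (rule differentiable_upto_cong_open[OF _ assms]) (simp add: pd_mult df dg)
  qed (simp add: df dg)
  ultimately show ?case by blast
qed

lemma differentiable_upto_const: "differentiable_upto n U (\<lambda>x. c)"
proof (induction n arbitrary: c)
  case (Suc n)
  have "pd i (\<lambda>x. c) = (\<lambda>x. 0)" for i by (simp add: fun_eq_iff)
  then show ?case by (intro differentiable_upto_SucI) (simp_all add: Suc.IH)
qed (simp add: differentiable_upto_def)

lemma differentiable_upto_inverse:
  assumes "open U"
  shows "differentiable_upto n U f \<Longrightarrow> \<forall>q\<in>U. f q \<noteq> 0 \<Longrightarrow> differentiable_upto n U (\<lambda>x. 1 / f x)"
proof (induction n arbitrary: f)
  case 0
  then show ?case unfolding differentiable_upto_def using differentiable_upto_differentiable[OF 0(1)] by simp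
next
  case (Suc n)
  have df: "\<And>p. p \<in> U \<Longrightarrow> f differentiable at p" using differentiable_upto_differentiable Suc.prems by blast
  show ?case
  proof (rule differentiable_upto_SucI)
    fix i
    have inv: "differentiable_upto n U (\<lambda>x. 1 / f x)" using Suc.IH Suc.prems differentiable_upto_Suc_imp by blast
    have "differentiable_upto n U (\<lambda>x. (-1) * pd i f x)"
      using differentiable_upto_add_mult[OF assms] differentiable_upto_const differentiable_upto_pd Suc.prems by blast
    then have "differentiable_upto n U (\<lambda>x. ((-1) * pd i f x) * (1 / f x) * (1 / f x))"
      using differentiable_upto_add_mult[OF assms] inv by blast
    then show "differentiable_upto n U (pd i (\<lambda>x. 1 / f x))"
      by (rule differentiable_upto_cong_open[OF _ assms]) (simp add: pd_divide df Suc.prems power2_eq_square)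
  qed (simp add: df Suc.prems)
qed

lemma smooth_on_add:
  "open U \<Longrightarrow> smooth_on U f \<Longrightarrow> smooth_on U g \<Longrightarrow> smooth_on U (\<lambda>x. f x + g x)"
  using differentiable_upto_add_mult unfolding smooth_on_iff_differentiable_upto by blast

lemma smooth_on_mult:
  "open U \<Longrightarrow> smooth_on U f \<Longrightarrow> smooth_on U g \<Longrightarrow> smooth_on U (\<lambda>x. f x * g x)"
  using differentiable_upto_add_mult unfolding smooth_on_iff_differentiable_upto by blast

lemma smooth_on_const: "smooth_on U (\<lambda>x. c)"
  unfolding smooth_on_iff_differentiable_upto using differentiable_upto_const by blast

lemma smooth_on_diff:
  assumes "open U" "smooth_on U f" "smooth_on U g"
  shows "smooth_on U (\<lambda>x. f x - g x)"
  using smooth_on_add[OF assms(1,2) smooth_on_mult[OF assms(1) smooth_on_const assms(3)], of "-1"]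
  by simp

lemma smooth_on_divide:
  assumes "open U" "smooth_on U f" "smooth_on U g" "\<forall>q\<in>U. g q \<noteq> 0"
  shows "smooth_on U (\<lambda>x. f x / g x)"
proof -
  have "smooth_on U (\<lambda>x. 1 / g x)"
    using differentiable_upto_inverse[OF assms(1)] assms(3,4) unfolding smooth_on_iff_differentiable_upto by blast
  from smooth_on_mult[OF assms(1,2) this] show ?thesis by simp
qed

lemma smooth_on_pd: "smooth_on U f \<Longrightarrow> smooth_on U (pd i f)"
  unfolding smooth_on_iff_differentiable_upto using differentiable_upto_pd by blast

lemma smooth_on_sum_2:
  assumes "open U" "\<And>k::2. smooth_on U (g k)"
  shows "smooth_on U (\<lambda>x. \<Sum>k\<in>UNIV. g k x)"
  using smooth_on_add[OF assms(1) assms(2) assms(2)] by (simp add: sum_2)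

lemma smooth_on_cong_open: "open U \<Longrightarrow> \<forall>q\<in>U. f q = g q \<Longrightarrow> smooth_on U f \<Longrightarrow> smooth_on U g"
  unfolding smooth_on_iff_differentiable_upto using differentiable_upto_cong_open by blast

lemma smooth_on_differentiable: "smooth_on U f \<Longrightarrow> p \<in> U \<Longrightarrow> f differentiable at p"
  unfolding smooth_on_iff_differentiable_upto using differentiable_upto_differentiable by blast

section \<open>Symmetry of second partial derivatives\<close>

lemma has_derivative_along_line:
  fixes f :: "'a::real_normed_vector \<Rightarrow> real"
  assumes "f differentiable at (c + t *\<^sub>R v)"
  shows "((\<lambda>s. f (c + s *\<^sub>R v)) has_derivative (\<lambda>u. u * frechet_derivative f (at (c + t *\<^sub>R v)) v)) (at t)"
proof -
  define D where "D = frechet_derivative f (at (c + t *\<^sub>R v))"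
  have line: "((\<lambda>s. c + s *\<^sub>R v) has_derivative (\<lambda>u. u *\<^sub>R v)) (at t)"
    by (auto intro!: derivative_eq_intros)
  have "(f has_derivative D) (at (c + t *\<^sub>R v))"
    using assms frechet_derivative_works D_def by blast
  from has_derivative_compose[OF line this] linear_scale[OF has_derivative_linear[OF this]]
  show ?thesis unfolding D_def by simp
qed

definition second_difference :: "('a::ab_group_add \<Rightarrow> 'b::ab_group_add) \<Rightarrow> 'a \<Rightarrow> 'a \<Rightarrow> 'a \<Rightarrow> 'b" where
  "second_difference f c u v = f (c + u + v) - f (c + u) - f (c + v) + f c"

lemma second_difference_commute: "second_difference f c u v = second_difference f c v u"
  by (simp add: second_difference_def add_ac)

lemma second_difference_mean_value:
  fixes f :: "'a::real_normed_vector \<Rightarrow> real"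
  assumes "0 < h"
    and df: "\<And>s t. 0 \<le> s \<Longrightarrow> s \<le> h \<Longrightarrow> 0 \<le> t \<Longrightarrow> t \<le> h \<Longrightarrow> f differentiable at (c + s *\<^sub>R a + t *\<^sub>R b)"
  obtains \<theta> where "0 < \<theta>" "\<theta> < h"
    "second_difference f c (h *\<^sub>R a) (h *\<^sub>R b) = h * (frechet_derivative f (at (c + h *\<^sub>R a + \<theta> *\<^sub>R b)) b - frechet_derivative f (at (c + \<theta> *\<^sub>R b)) b)"
proof -
  define F where "F q = frechet_derivative f (at q) b" for q
  define g where "g t = f (c + h *\<^sub>R a + t *\<^sub>R b) - f (c + t *\<^sub>R b)" for t
  have "(g has_derivative (\<lambda>u. u * (F (c + h *\<^sub>R a + t *\<^sub>R b) - F (c + t *\<^sub>R b)))) (at t within {0..h})"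
    if "0 \<le> t" "t \<le> h" for t
  proof -
    have "((\<lambda>s. f (c + h *\<^sub>R a + s *\<^sub>R b)) has_derivative (\<lambda>u. u * F (c + h *\<^sub>R a + t *\<^sub>R b))) (at t)"
      using has_derivative_along_line[of f "c + h *\<^sub>R a" t b] df[of h t] that \<open>0 < h\<close> F_def by simp
    moreover have "((\<lambda>s. f (c + s *\<^sub>R b)) has_derivative (\<lambda>u. u * F (c + t *\<^sub>R b))) (at t)"
      using has_derivative_along_line[of f c t b] df[of 0 t] that F_def by simp
    ultimately show ?thesis
      unfolding g_def by (auto intro: has_derivative_at_withinI dest: has_derivative_diff simp: right_diff_distrib)
  qed
  from mvt_simple[OF \<open>0 < h\<close> this] obtain \<theta> where "\<theta> \<in> {0<..<h}"
    and "g h - g 0 = (h - 0) * (F (c + h *\<^sub>R a + \<theta> *\<^sub>R b) - F (c + \<theta> *\<^sub>R b))"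
    by blast
  moreover have "g h - g 0 = second_difference f c (h *\<^sub>R a) (h *\<^sub>R b)"
    by (simp add: g_def second_difference_def)
  ultimately show ?thesis by (intro that[of \<theta>]) (auto simp: F_def)
qed

lemma has_derivative_difference_bound:
  fixes F :: "'a::real_normed_vector \<Rightarrow> real"
  assumes "(F has_derivative L) (at p)" "0 < e"
  obtains d where "0 < d"
    "\<And>y z. norm (y - p) < d \<Longrightarrow> norm (z - p) < d
       \<Longrightarrow> \<bar>F y - F z - L (y - z)\<bar> \<le> e * (norm (y - p) + norm (z - p))"
proof -
  obtain d where "0 < d" and d: "\<And>y. norm (y - p) < d \<Longrightarrow> \<bar>F y - F p - L (y - p)\<bar> \<le> e * norm (y - p)"
    using assms[unfolded has_derivative_at_alt] by (metis real_norm_def)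
  have "\<bar>F y - F z - L (y - z)\<bar> \<le> e * (norm (y - p) + norm (z - p))"
    if "norm (y - p) < d" "norm (z - p) < d" for y z
  proof -
    have "L (y - z) = L (y - p) - L (z - p)"
      using linear_diff[OF has_derivative_linear[OF assms(1)]] by (metis diff_diff_eq2 diff_add_cancel)
    then have "F y - F z - L (y - z) = (F y - F p - L (y - p)) - (F z - F p - L (z - p))"
      by simp
    with d[OF that(1)] d[OF that(2)] show ?thesis by (simp add: distrib_left abs_le_iff)
  qed
  with \<open>0 < d\<close> that show ?thesis by blast
qed

lemma second_difference_quotient_estimate:
  fixes f :: "pt \<Rightarrow> real" and a b :: 2
  defines "ea \<equiv> axis a 1 :: pt" and "eb \<equiv> axis b 1 :: pt"
  assumes "0 < h" "0 \<le> e" "linear L"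
    and df: "\<And>s t. 0 \<le> s \<Longrightarrow> s \<le> h \<Longrightarrow> 0 \<le> t \<Longrightarrow> t \<le> h \<Longrightarrow> f differentiable at (p + s *\<^sub>R ea + t *\<^sub>R eb)"
    and bound: "\<And>y z. norm (y - p) \<le> 2 * h \<Longrightarrow> norm (z - p) \<le> 2 * h
       \<Longrightarrow> \<bar>pd b f y - pd b f z - L (y - z)\<bar> \<le> e * (norm (y - p) + norm (z - p))"
  shows "\<bar>second_difference f p (h *\<^sub>R ea) (h *\<^sub>R eb) / h\<^sup>2 - L ea\<bar> \<le> 3 * e"
proof -
  define F where "F = pd b f"
  have F_eq: "frechet_derivative f (at q) eb = F q" for q unfolding F_def pd_def eb_def ..
  obtain \<theta> where "0 < \<theta>" "\<theta> < h" and second_diff: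
    "second_difference f p (h *\<^sub>R ea) (h *\<^sub>R eb) = h * (F (p + h *\<^sub>R ea + \<theta> *\<^sub>R eb) - F (p + \<theta> *\<^sub>R eb))"
    by (rule second_difference_mean_value[OF \<open>0 < h\<close> df, unfolded F_eq])
  define y z where "y = p + h *\<^sub>R ea + \<theta> *\<^sub>R eb" and "z = p + \<theta> *\<^sub>R eb"
  have ny: "norm (y - p) \<le> h + \<theta>"
    using norm_triangle_ineq[of "h *\<^sub>R ea" "\<theta> *\<^sub>R eb"] \<open>0 < \<theta>\<close> \<open>0 < h\<close>
    by (simp add: y_def ea_def eb_def)
  have nz: "norm (z - p) \<le> \<theta>"
    using \<open>0 < \<theta>\<close> by (simp add: z_def eb_def)
  have "norm (y - p) \<le> 2 * h" "norm (z - p) \<le> 2 * h"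
    using ny nz \<open>0 < \<theta>\<close> \<open>\<theta> < h\<close> by linarith+
  moreover have "L (y - z) = h * L ea"
    using linear_scale[OF \<open>linear L\<close>] by (simp add: y_def z_def)
  ultimately have "\<bar>F y - F z - h * L ea\<bar> \<le> e * (norm (y - p) + norm (z - p))"
    using bound unfolding F_def by metis
  also have "\<dots> \<le> e * (3 * h)"
    using ny nz \<open>\<theta> < h\<close> \<open>0 \<le> e\<close> by (intro mult_left_mono) auto
  finally have "\<bar>F y - F z - h * L ea\<bar> / h \<le> 3 * e"
    using \<open>0 < h\<close> by (simp add: divide_le_eq)
  moreover have "(h * (F y - F z)) / h\<^sup>2 - L ea = (F y - F z - h * L ea) / h"
    using \<open>0 < h\<close> by (simp add: power2_eq_square field_simps)
  ultimately show ?thesis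
    using second_diff \<open>0 < h\<close> by (simp add: y_def z_def)
qed

lemma second_difference_quotient_tendsto:
  fixes f :: "pt \<Rightarrow> real"
  assumes "open U" "p \<in> U" and df: "\<forall>q\<in>U. f differentiable at q"
    and dF: "pd b f differentiable at p"
  shows "((\<lambda>h. second_difference f p (h *\<^sub>R axis a 1) (h *\<^sub>R axis b 1) / h\<^sup>2)
           \<longlongrightarrow> pd a (pd b f) p) (at_right 0)"
proof -
  obtain L where L: "(pd b f has_derivative L) (at p)" using dF unfolding differentiable_def by blast
  have La: "L (axis a 1) = pd a (pd b f) p" using pd_has_derivative[OF L] by simp
  obtain R where "R > 0" "ball p R \<subseteq> U" using assms(1,2) open_contains_ball by blast
  have near: "p + s *\<^sub>R axis a 1 + t *\<^sub>R axis b 1 \<in> U" if "0 \<le> s" "s < R / 2" "0 \<le> t" "t < R / 2" for s t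
  proof -
    have "norm (s *\<^sub>R axis a 1 + t *\<^sub>R axis b 1 :: pt) \<le> s + t"
      using norm_triangle_ineq[of "s *\<^sub>R axis a 1 :: pt" "t *\<^sub>R axis b 1"] that by simp
    then have "dist p (p + s *\<^sub>R axis a 1 + t *\<^sub>R axis b 1) < R"
      using norm_minus_cancel[of "s *\<^sub>R axis a 1 + t *\<^sub>R axis b 1 :: pt"] that
      by (simp add: dist_norm add.assoc)
    with \<open>ball p R \<subseteq> U\<close> show ?thesis by auto
  qed
  show ?thesis unfolding tendsto_iff eventually_at_right_field dist_real_def
  proof (intro allI impI)
    fix e :: real assume "e > 0"
    then obtain d where "d > 0" and d: "\<And>y z. norm (y - p) < d \<Longrightarrow> norm (z - p) < d
       \<Longrightarrow> \<bar>pd b f y - pd b f z - L (y - z)\<bar> \<le> e / 4 * (norm (y - p) + norm (z - p))"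
      using has_derivative_difference_bound[OF L, of "e / 4"] by auto
    have "\<bar>second_difference f p (h *\<^sub>R axis a 1) (h *\<^sub>R axis b 1) / h\<^sup>2 - L (axis a 1)\<bar> \<le> 3 * (e / 4)"
      if "0 < h" "h < min R d / 2" for h
      using that \<open>e > 0\<close> df near d
      by (intro second_difference_quotient_estimate has_derivative_linear[OF L]) auto
    then show "\<exists>bnd>0. \<forall>h>0. h < bnd \<longrightarrow>
        \<bar>second_difference f p (h *\<^sub>R axis a 1) (h *\<^sub>R axis b 1) / h\<^sup>2 - pd a (pd b f) p\<bar> < e"
      using \<open>R > 0\<close> \<open>d > 0\<close> \<open>e > 0\<close> La by (intro exI[of _ "min R d / 2"]) force
  qed
qed

theorem pd_commute:
  assumes "open U" "p \<in> U" "smooth_on U f"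
  shows "pd a (pd b f) p = pd b (pd a f) p"
proof -
  have df: "\<forall>q\<in>U. f differentiable at q"
    using assms(3) smooth_on_differentiable by blast
  have dF: "pd c f differentiable at p" for c
    using smooth_on_differentiable[OF smooth_on_pd[OF assms(3)] assms(2)] .
  note lim = second_difference_quotient_tendsto[OF assms(1,2) df dF]
  show ?thesis
    using tendsto_unique[OF trivial_limit_at_right_real lim[where a = a and b = b]] lim[where a = b and b = a]
    by (simp add: second_difference_commute)
qed

section \<open>Curvature in dimension two\<close>

lemma curv_two_dim:
  "curv \<Gamma> m l i j p = (if m = i then ricci \<Gamma> j l p else 0) - (if m = j then ricci \<Gamma> i l p else 0)"
proof -
  have skew: "curv \<Gamma> m l i j p = - curv \<Gamma> m l j i p" for m l i j
    by (simp add: curv_def sum_2 algebra_simps)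
  have diag: "curv \<Gamma> m l i i p = 0" for m l i
    by (simp add: curv_def)
  show ?thesis
    using exhaust_2[of m] exhaust_2[of i] exhaust_2[of j]
    by (auto simp: ricci_def sum_2 diag skew[of _ _ 2 1])
qed

text \<open>The Ricci identity for a 1-form, as a polynomial identity in the first jet of \<open>\<Gamma>\<close> and
  the second jet of \<open>X\<close> at a point.\<close>
lemma ricci_identity_algebraic:
  fixes G :: "2 \<Rightarrow> 2 \<Rightarrow> 2 \<Rightarrow> real" and dG :: "2 \<Rightarrow> 2 \<Rightarrow> 2 \<Rightarrow> 2 \<Rightarrow> real" and X :: "2 \<Rightarrow> real"
    and dX :: "2 \<Rightarrow> 2 \<Rightarrow> real" and ddX :: "2 \<Rightarrow> 2 \<Rightarrow> 2 \<Rightarrow> real"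
    and C :: "2 \<Rightarrow> 2 \<Rightarrow> real" and dC :: "2 \<Rightarrow> 2 \<Rightarrow> 2 \<Rightarrow> real"
  assumes "\<And>k. G k 2 1 = G k 1 2" and "\<And>a k. dG a k 2 1 = dG a k 1 2" and "\<And>c. ddX 2 1 c = ddX 1 2 c"
    and "\<And>j l. C j l = dX j l - (\<Sum>k\<in>UNIV. G k j l * X k)"
    and "\<And>a j l. dC a j l = ddX a j l - (\<Sum>k\<in>UNIV. dG a k j l * X k + G k j l * dX a k)"
  shows "(dC i j l - (\<Sum>k\<in>UNIV. G k i j * C k l) - (\<Sum>k\<in>UNIV. G k i l * C j k))
       - (dC j i l - (\<Sum>k\<in>UNIV. G k j i * C k l) - (\<Sum>k\<in>UNIV. G k j l * C i k))
       = - (\<Sum>m\<in>UNIV. (dG i m j l - dG j m i l + (\<Sum>k\<in>UNIV. G m i k * G k j l - G m j k * G k i l)) * X m)"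
proof -
  have "\<forall>i j l. (dC i j l - (\<Sum>k\<in>UNIV. G k i j * C k l) - (\<Sum>k\<in>UNIV. G k i l * C j k))
       - (dC j i l - (\<Sum>k\<in>UNIV. G k j i * C k l) - (\<Sum>k\<in>UNIV. G k j l * C i k))
       = - (\<Sum>m\<in>UNIV. (dG i m j l - dG j m i l + (\<Sum>k\<in>UNIV. G m i k * G k j l - G m j k * G k i l)) * X m)"
    unfolding forall_2 by (simp add: sum_2 assms algebra_simps)
  then show ?thesis by blast
qed

section \<open>Connections with skew-symmetric nowhere vanishing Ricci tensor\<close>

locale skew_ricci_connection =
  fixes U :: "pt set" and \<Gamma> :: "2 \<Rightarrow> 2 \<Rightarrow> 2 \<Rightarrow> pt \<Rightarrow> real"
  assumes U_open: "open U"
    and \<Gamma>_smooth: "\<And>k i j. smooth_on U (\<Gamma> k i j)"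
    and torsion_free: "\<And>k i j p. p \<in> U \<Longrightarrow> \<Gamma> k i j p = \<Gamma> k j i p"
    and ricci_skew: "\<And>i j p. p \<in> U \<Longrightarrow> ricci \<Gamma> j i p = - ricci \<Gamma> i j p"
    and ricci_nonzero: "\<And>p. p \<in> U \<Longrightarrow> \<exists>i j. ricci \<Gamma> i j p \<noteq> 0"
begin

lemma ricci_diag: "q \<in> U \<Longrightarrow> ricci \<Gamma> i i q = 0"
  using ricci_skew[of q i i] by simp

lemma ricci_21: "q \<in> U \<Longrightarrow> ricci \<Gamma> 2 1 q = - ricci \<Gamma> 1 2 q"
  using ricci_skew[of q 1 2] by simp

lemma ricci_12_nonzero: "q \<in> U \<Longrightarrow> ricci \<Gamma> 1 2 q \<noteq> 0"
proof
  assume "q \<in> U" "ricci \<Gamma> 1 2 q = 0"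
  then have "ricci \<Gamma> i j q = 0" for i j
    using ricci_diag ricci_21 exhaust_2[of i] exhaust_2[of j] by fastforce
  with ricci_nonzero[OF \<open>q \<in> U\<close>] show False by blast
qed

lemma smooth_on_curv: "smooth_on U (curv \<Gamma> l k i j)"
proof -
  have "smooth_on U (\<lambda>p. pd i (\<Gamma> l j k) p - pd j (\<Gamma> l i k) p
     + (\<Sum>m\<in>UNIV. \<Gamma> l i m p * \<Gamma> m j k p - \<Gamma> l j m p * \<Gamma> m i k p))"
    by (intro smooth_on_add smooth_on_diff smooth_on_mult smooth_on_sum_2 smooth_on_pd U_open \<Gamma>_smooth)
  then show ?thesis unfolding curv_def[abs_def] .
qed

lemma smooth_on_ricci: "smooth_on U (ricci \<Gamma> j k)"
  unfolding ricci_def[abs_def] by (intro smooth_on_sum_2 U_open smooth_on_curv)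

lemma pd_\<Gamma>_sym: "q \<in> U \<Longrightarrow> pd a (\<Gamma> k i j) q = pd a (\<Gamma> k j i) q"
  using pd_cong_open[OF U_open, of q "\<Gamma> k i j" "\<Gamma> k j i"] torsion_free by blast

lemma pd_ricci_diag: "q \<in> U \<Longrightarrow> pd i (ricci \<Gamma> k k) q = 0"
  using pd_cong_open[OF U_open, of q "ricci \<Gamma> k k" "\<lambda>x. 0"] ricci_diag by simp

lemma pd_ricci_21: "q \<in> U \<Longrightarrow> pd i (ricci \<Gamma> 2 1) q = - pd i (ricci \<Gamma> 1 2) q"
  using pd_cong_open[OF U_open, of q "ricci \<Gamma> 2 1" "\<lambda>x. (-1) * ricci \<Gamma> 1 2 x"] ricci_21
    pd_cmult[OF smooth_on_differentiable[OF smooth_on_ricci], of q i "-1"]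
  by simp

lemma cov2_ricci_explicit:
  assumes "q \<in> U"
  shows "cov2 \<Gamma> (ricci \<Gamma>) i j k q
    = (pd i (ricci \<Gamma> 1 2) q / ricci \<Gamma> 1 2 q - (\<Gamma> 1 i 1 q + \<Gamma> 2 i 2 q)) * ricci \<Gamma> j k q"
proof -
  have "ricci \<Gamma> 1 2 q \<noteq> 0" using ricci_12_nonzero[OF assms] .
  then have "cov2 \<Gamma> (ricci \<Gamma>) i j k q
    = (pd i (ricci \<Gamma> 1 2) q / ricci \<Gamma> 1 2 q - (\<Gamma> 1 i 1 q + \<Gamma> 2 i 2 q)) * ricci \<Gamma> j k q"
    if "j = 1 \<and> k = 2 \<or> j = 2 \<and> k = 1"
    using that ricci_diag[OF assms] ricci_21[OF assms] pd_ricci_21[OF assms]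
    by (auto simp: cov2_def sum_2 field_simps)
  moreover have "cov2 \<Gamma> (ricci \<Gamma>) i k k q = 0"
    using ricci_diag[OF assms] ricci_21[OF assms] pd_ricci_diag[OF assms] exhaust_2[of k]
    by (auto simp: cov2_def sum_2)
  ultimately show ?thesis
    using ricci_diag[OF assms] exhaust_2[of j] exhaust_2[of k] by fastforce
qed

lemma phi_eq:
  assumes "q \<in> U"
  shows "phi \<Gamma> i q = pd i (ricci \<Gamma> 1 2) q / ricci \<Gamma> 1 2 q - (\<Gamma> 1 i 1 q + \<Gamma> 2 i 2 q)"
  unfolding phi_def
proof (rule the_equality)
  fix c assume "\<forall>j k. cov2 \<Gamma> (ricci \<Gamma>) i j k q = c * ricci \<Gamma> j k q"
  then show "c = pd i (ricci \<Gamma> 1 2) q / ricci \<Gamma> 1 2 q - (\<Gamma> 1 i 1 q + \<Gamma> 2 i 2 q)"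
    using cov2_ricci_explicit[OF assms, of i 1 2] ricci_12_nonzero[OF assms] by simp
qed (use cov2_ricci_explicit[OF assms] in blast)

lemma cov2_ricci: "q \<in> U \<Longrightarrow> cov2 \<Gamma> (ricci \<Gamma>) i j k q = phi \<Gamma> i q * ricci \<Gamma> j k q"
  using cov2_ricci_explicit phi_eq by simp

lemma smooth_on_phi: "smooth_on U (phi \<Gamma> i)"
proof (rule smooth_on_cong_open[OF U_open])
  show "smooth_on U (\<lambda>x. pd i (ricci \<Gamma> 1 2) x / ricci \<Gamma> 1 2 x - (\<Gamma> 1 i 1 x + \<Gamma> 2 i 2 x))"
    using ricci_12_nonzero
    by (intro smooth_on_diff smooth_on_add smooth_on_divide smooth_on_pd U_open \<Gamma>_smooth smooth_on_ricci) auto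
qed (simp add: phi_eq)

lemma wvec_eq:
  assumes "q \<in> U"
  shows "wvec \<Gamma> k q = (if k = 1 then phi \<Gamma> 2 q else - phi \<Gamma> 1 q) / ricci \<Gamma> 1 2 q"
proof -
  define w where "w k = (if k = 1 then phi \<Gamma> 2 q else - phi \<Gamma> 1 q) / ricci \<Gamma> 1 2 q" for k :: 2
  have nz: "ricci \<Gamma> 1 2 q \<noteq> 0" using ricci_12_nonzero[OF assms] .
  have ricci_vals: "ricci \<Gamma> 1 1 q = 0" "ricci \<Gamma> 2 2 q = 0" "ricci \<Gamma> 2 1 q = - ricci \<Gamma> 1 2 q"
    using ricci_diag[OF assms] ricci_21[OF assms] by auto
  have "(THE v. \<forall>j. phi \<Gamma> j q = (\<Sum>i\<in>UNIV. ricci \<Gamma> i j q * v i)) = w"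
  proof (rule the_equality)
    show "\<forall>j. phi \<Gamma> j q = (\<Sum>i\<in>UNIV. ricci \<Gamma> i j q * w i)"
      unfolding forall_2 using nz by (simp add: sum_2 ricci_vals w_def)
  next
    fix v assume "\<forall>j. phi \<Gamma> j q = (\<Sum>i\<in>UNIV. ricci \<Gamma> i j q * v i)"
    then have "v 1 = w 1" "v 2 = w 2"
      unfolding forall_2 using nz by (simp_all add: sum_2 ricci_vals w_def field_simps)
    then show "v = w" using exhaust_2 by (metis ext)
  qed
  then show ?thesis unfolding wvec_def w_def by simp
qed

lemma phi_wvec:
  assumes "q \<in> U"
  shows "phi \<Gamma> 1 q = - ricci \<Gamma> 1 2 q * wvec \<Gamma> 2 q" and "phi \<Gamma> 2 q = ricci \<Gamma> 1 2 q * wvec \<Gamma> 1 q"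
  using wvec_eq[OF assms] ricci_12_nonzero[OF assms] by simp_all

lemma smooth_on_wvec: "smooth_on U (wvec \<Gamma> k)"
proof (rule smooth_on_cong_open[OF U_open])
  have "smooth_on U (\<lambda>x. phi \<Gamma> 2 x / ricci \<Gamma> 1 2 x)" "smooth_on U (\<lambda>x. (0 - phi \<Gamma> 1 x) / ricci \<Gamma> 1 2 x)"
    using ricci_12_nonzero
    by (intro smooth_on_divide smooth_on_diff smooth_on_const U_open smooth_on_phi smooth_on_ricci; blast)+
  then show "smooth_on U (\<lambda>x. (if k = 1 then phi \<Gamma> 2 x else - phi \<Gamma> 1 x) / ricci \<Gamma> 1 2 x)"
    by (cases "k = 1") simp_all
qed (simp add: wvec_eq)

lemma dform_phi:
  assumes "q \<in> U"
  shows "dform (phi \<Gamma>) 1 2 q = 2 * ricci \<Gamma> 1 2 q"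
proof -
  define r where "r = ricci \<Gamma> 1 2"
  have nz: "r q \<noteq> 0" using ricci_12_nonzero[OF assms] r_def by simp
  have diff: "\<Gamma> k i j differentiable at q" "r differentiable at q" "pd a r differentiable at q" for k i j a
    using smooth_on_differentiable[OF _ assms] \<Gamma>_smooth smooth_on_ricci smooth_on_pd r_def by auto
  have pd_phi: "pd a (phi \<Gamma> b) q = (pd a (pd b r) q * r q - pd b r q * pd a r q) / (r q)\<^sup>2
      - (pd a (\<Gamma> 1 b 1) q + pd a (\<Gamma> 2 b 2) q)" for a b
  proof -
    have "pd a (phi \<Gamma> b) q = pd a (\<lambda>x. pd b r x / r x - (\<Gamma> 1 b 1 x + \<Gamma> 2 b 2 x)) q"
      using pd_cong_open[OF U_open assms] phi_eq r_def by simp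
    then show ?thesis using diff nz by (simp add: pd_diff pd_add pd_divide)
  qed
  have "pd 1 (pd 2 r) q = pd 2 (pd 1 r) q"
    using pd_commute[OF U_open assms] smooth_on_ricci r_def by blast
  moreover have "2 * r q = - (pd 1 (\<Gamma> 1 2 1) q + pd 1 (\<Gamma> 2 2 2) q) + (pd 2 (\<Gamma> 1 1 1) q + pd 2 (\<Gamma> 2 1 2) q)"
  proof -
    have "2 * r q = ricci \<Gamma> 1 2 q - ricci \<Gamma> 2 1 q" using ricci_21[OF assms] r_def by simp
    also have "\<dots> = - (pd 1 (\<Gamma> 1 2 1) q + pd 1 (\<Gamma> 2 2 2) q) + (pd 2 (\<Gamma> 1 1 1) q + pd 2 (\<Gamma> 2 1 2) q)"
      using torsion_free[OF assms] pd_\<Gamma>_sym[OF assms]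
      by (simp add: ricci_def curv_def sum_2 algebra_simps)
    finally show ?thesis .
  qed
  ultimately show ?thesis unfolding dform_def pd_phi r_def by (simp add: algebra_simps)
qed

lemma Bop_eqI:
  assumes "q \<in> U" "c * ricci \<Gamma> 1 2 q = dnabla \<Gamma> \<tau> 1 2 l q"
  shows "Bop \<Gamma> \<tau> l q = c"
  unfolding Bop_def
proof (rule the_equality)
  have "dnabla \<Gamma> \<tau> i i l q = 0" "dnabla \<Gamma> \<tau> 2 1 l q = - dnabla \<Gamma> \<tau> 1 2 l q" for i
    by (simp_all add: dnabla_def)
  then show "\<forall>i j. c * ricci \<Gamma> i j q = dnabla \<Gamma> \<tau> i j l q"
    unfolding forall_2 using assms ricci_diag ricci_21 by auto
next
  fix c' assume "\<forall>i j. c' * ricci \<Gamma> i j q = dnabla \<Gamma> \<tau> i j l q"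
  then show "c' = c" using assms ricci_12_nonzero by (metis mult_right_cancel)
qed

lemma Dop_eqI:
  assumes "q \<in> U" "2 * c * ricci \<Gamma> 1 2 q = wedge1 \<eta> (phi \<Gamma>) 1 2 q - dform \<eta> 1 2 q"
  shows "Dop \<Gamma> \<eta> q = c"
  unfolding Dop_def
proof (rule the_equality)
  have "wedge1 \<eta> (phi \<Gamma>) i i q - dform \<eta> i i q = 0"
    "wedge1 \<eta> (phi \<Gamma>) 2 1 q - dform \<eta> 2 1 q = - (wedge1 \<eta> (phi \<Gamma>) 1 2 q - dform \<eta> 1 2 q)" for i
    by (simp_all add: wedge1_def dform_def)
  then show "\<forall>i j. 2 * c * ricci \<Gamma> i j q = wedge1 \<eta> (phi \<Gamma>) i j q - dform \<eta> i j q"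
    unfolding forall_2 using assms ricci_diag ricci_21 by auto
next
  fix c' assume "\<forall>i j. 2 * c' * ricci \<Gamma> i j q = wedge1 \<eta> (phi \<Gamma>) i j q - dform \<eta> i j q"
  then show "c' = c" using assms ricci_12_nonzero by (metis mult_right_cancel mult_cancel_left zero_neq_numeral)
qed

end

section \<open>The Killing operator on 1-forms\<close>

text \<open>The \<open>f\<close> with \<open>\<nabla>\<xi> = \<L>\<xi> + f \<rho>\<close>, read off from \<open>d\<xi> = 2 f \<rho>\<close>.\<close>
definition skew_coeff :: "(2 \<Rightarrow> 2 \<Rightarrow> 2 \<Rightarrow> pt \<Rightarrow> real) \<Rightarrow> (2 \<Rightarrow> pt \<Rightarrow> real) \<Rightarrow> pt \<Rightarrow> real" where
  "skew_coeff \<Gamma> \<xi> x = (pd 1 (\<xi> 2) x - pd 2 (\<xi> 1) x) / (2 * ricci \<Gamma> 1 2 x)"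

definition B_killing_formula :: "(2 \<Rightarrow> 2 \<Rightarrow> 2 \<Rightarrow> pt \<Rightarrow> real) \<Rightarrow> (2 \<Rightarrow> pt \<Rightarrow> real) \<Rightarrow> 2 \<Rightarrow> pt \<Rightarrow> real" where
  "B_killing_formula \<Gamma> \<xi> l x = \<xi> l x + pd l (skew_coeff \<Gamma> \<xi>) x + skew_coeff \<Gamma> \<xi> x * phi \<Gamma> l x"

locale skew_ricci_one_form = skew_ricci_connection +
  fixes \<xi> :: "2 \<Rightarrow> pt \<Rightarrow> real"
  assumes \<xi>_smooth: "\<And>i. smooth_on U (\<xi> i)"
begin

lemma smooth_on_skew_coeff: "smooth_on U (skew_coeff \<Gamma> \<xi>)"
proof -
  have "smooth_on U (\<lambda>x. (pd 1 (\<xi> 2) x - pd 2 (\<xi> 1) x) / (2 * ricci \<Gamma> 1 2 x))"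
    using ricci_12_nonzero
    by (intro smooth_on_divide smooth_on_diff smooth_on_mult smooth_on_const smooth_on_pd U_open
        \<xi>_smooth smooth_on_ricci) auto
  then show ?thesis unfolding skew_coeff_def[abs_def] .
qed

lemma smooth_on_cov1: "smooth_on U (cov1 \<Gamma> \<xi> i j)"
proof -
  have "smooth_on U (\<lambda>p. pd i (\<xi> j) p - (\<Sum>k\<in>UNIV. \<Gamma> k i j p * \<xi> k p))"
    by (intro smooth_on_diff smooth_on_mult smooth_on_sum_2 smooth_on_pd U_open \<Gamma>_smooth \<xi>_smooth)
  then show ?thesis unfolding cov1_def[abs_def] .
qed

lemma differentiable_data:
  assumes "q \<in> U"
  shows "\<Gamma> k i j differentiable at q" "\<xi> k differentiable at q" "pd a (\<xi> k) differentiable at q"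
    "skew_coeff \<Gamma> \<xi> differentiable at q" "pd a (skew_coeff \<Gamma> \<xi>) differentiable at q"
    "ricci \<Gamma> j k differentiable at q" "cov1 \<Gamma> \<xi> j k differentiable at q"
    "wvec \<Gamma> k differentiable at q" "phi \<Gamma> k differentiable at q"
  using \<Gamma>_smooth \<xi>_smooth smooth_on_pd[OF \<xi>_smooth] smooth_on_skew_coeff smooth_on_pd[OF smooth_on_skew_coeff]
    smooth_on_ricci smooth_on_cov1 smooth_on_wvec smooth_on_phi
  by (simp_all add: smooth_on_differentiable[OF _ assms])

lemma dform_\<xi>: "q \<in> U \<Longrightarrow> dform \<xi> 1 2 q = 2 * skew_coeff \<Gamma> \<xi> q * ricci \<Gamma> 1 2 q"
  using ricci_12_nonzero by (simp add: skew_coeff_def dform_def)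

lemma killing_eq:
  assumes "q \<in> U"
  shows "killing \<Gamma> \<xi> j l q = cov1 \<Gamma> \<xi> j l q - skew_coeff \<Gamma> \<xi> q * ricci \<Gamma> j l q"
proof -
  have "\<forall>j l. killing \<Gamma> \<xi> j l q = cov1 \<Gamma> \<xi> j l q - skew_coeff \<Gamma> \<xi> q * ricci \<Gamma> j l q"
    unfolding forall_2 using dform_\<xi>[OF assms] torsion_free[OF assms] ricci_diag[OF assms] ricci_21[OF assms]
    by (simp add: killing_def cov1_def dform_def sum_2 field_simps)
  then show ?thesis by blast
qed

lemma pd_cov1:
  assumes "q \<in> U"
  shows "pd a (cov1 \<Gamma> \<xi> j l) q
    = pd a (pd j (\<xi> l)) q - (\<Sum>k\<in>UNIV. pd a (\<Gamma> k j l) q * \<xi> k q + \<Gamma> k j l q * pd a (\<xi> k) q)"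
proof -
  have "cov1 \<Gamma> \<xi> j l = (\<lambda>p. pd j (\<xi> l) p - (\<Gamma> 1 j l p * \<xi> 1 p + \<Gamma> 2 j l p * \<xi> 2 p))"
    by (simp add: cov1_def sum_2 fun_eq_iff)
  then show ?thesis using differentiable_data[OF assms] by (simp add: pd_diff pd_add pd_mult sum_2)
qed

lemma ricci_identity:
  assumes "q \<in> U"
  shows "cov2 \<Gamma> (cov1 \<Gamma> \<xi>) i j l q - cov2 \<Gamma> (cov1 \<Gamma> \<xi>) j i l q
    = - (ricci \<Gamma> j l q * \<xi> i q - ricci \<Gamma> i l q * \<xi> j q)"
proof -
  have "cov2 \<Gamma> (cov1 \<Gamma> \<xi>) i j l q - cov2 \<Gamma> (cov1 \<Gamma> \<xi>) j i l q
     = - (\<Sum>m\<in>UNIV. (pd i (\<Gamma> m j l) q - pd j (\<Gamma> m i l) q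
          + (\<Sum>k\<in>UNIV. \<Gamma> m i k q * \<Gamma> k j l q - \<Gamma> m j k q * \<Gamma> k i l q)) * \<xi> m q)"
    unfolding cov2_def
    by (rule ricci_identity_algebraic[where G = "\<lambda>k i j. \<Gamma> k i j q" and dG = "\<lambda>a k i j. pd a (\<Gamma> k i j) q"
          and X = "\<lambda>k. \<xi> k q" and dX = "\<lambda>a k. pd a (\<xi> k) q" and ddX = "\<lambda>a b c. pd a (pd b (\<xi> c)) q"])
      (simp_all add: torsion_free[OF assms] pd_\<Gamma>_sym[OF assms] pd_commute[OF U_open assms \<xi>_smooth]
        cov1_def[of \<Gamma> \<xi> _ _ q] pd_cov1[OF assms])
  also have "\<dots> = - (\<Sum>m\<in>UNIV. curv \<Gamma> m l i j q * \<xi> m q)"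
    by (simp add: curv_def)
  also have "\<dots> = - (ricci \<Gamma> j l q * \<xi> i q - ricci \<Gamma> i l q * \<xi> j q)"
    unfolding curv_two_dim using exhaust_2[of i] exhaust_2[of j] by (auto simp: sum_2)
  finally show ?thesis .
qed

lemma cov2_killing:
  assumes "q \<in> U"
  shows "cov2 \<Gamma> (killing \<Gamma> \<xi>) i j l q = cov2 \<Gamma> (cov1 \<Gamma> \<xi>) i j l q
          - (pd i (skew_coeff \<Gamma> \<xi>) q + skew_coeff \<Gamma> \<xi> q * phi \<Gamma> i q) * ricci \<Gamma> j l q"
proof -
  have "pd i (killing \<Gamma> \<xi> j l) q = pd i (\<lambda>x. cov1 \<Gamma> \<xi> j l x - skew_coeff \<Gamma> \<xi> x * ricci \<Gamma> j l x) q"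
    by (rule pd_cong_open[OF U_open assms]) (simp add: killing_eq)
  also have "\<dots> = pd i (cov1 \<Gamma> \<xi> j l) q
      - (pd i (skew_coeff \<Gamma> \<xi>) q * ricci \<Gamma> j l q + skew_coeff \<Gamma> \<xi> q * pd i (ricci \<Gamma> j l) q)"
    using differentiable_data[OF assms] by (simp add: pd_diff pd_mult)
  finally have pd_killing: "pd i (killing \<Gamma> \<xi> j l) q = \<dots>" .
  have pd_ricci: "pd i (ricci \<Gamma> j l) q = phi \<Gamma> i q * ricci \<Gamma> j l q
      + (\<Sum>k\<in>UNIV. \<Gamma> k i j q * ricci \<Gamma> k l q) + (\<Sum>k\<in>UNIV. \<Gamma> k i l q * ricci \<Gamma> j k q)"
    using cov2_ricci[OF assms, of i j l] by (simp add: cov2_def)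
  show ?thesis
    unfolding cov2_def pd_killing pd_ricci by (simp add: killing_eq[OF assms] sum_2 algebra_simps)
qed

lemma dnabla_killing:
  assumes "q \<in> U"
  shows "dnabla \<Gamma> (killing \<Gamma> \<xi>) i j l q
    = B_killing_formula \<Gamma> \<xi> j q * ricci \<Gamma> i l q - B_killing_formula \<Gamma> \<xi> i q * ricci \<Gamma> j l q"
  unfolding dnabla_def cov2_killing[OF assms]
  using ricci_identity[OF assms, of i j l] by (simp add: B_killing_formula_def algebra_simps)

lemma Bop_killing: "q \<in> U \<Longrightarrow> Bop \<Gamma> (killing \<Gamma> \<xi>) l q = B_killing_formula \<Gamma> \<xi> l q"
  using exhaust_2[of l] ricci_diag ricci_21
  by (intro Bop_eqI) (auto simp: dnabla_killing algebra_simps)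

lemma pd_Bop_killing:
  assumes "q \<in> U"
  shows "pd a (Bop \<Gamma> (killing \<Gamma> \<xi>) b) q = pd a (\<xi> b) q + pd a (pd b (skew_coeff \<Gamma> \<xi>)) q
          + (pd a (skew_coeff \<Gamma> \<xi>) q * phi \<Gamma> b q + skew_coeff \<Gamma> \<xi> q * pd a (phi \<Gamma> b) q)"
proof -
  have "pd a (Bop \<Gamma> (killing \<Gamma> \<xi>) b) q
      = pd a (\<lambda>x. \<xi> b x + pd b (skew_coeff \<Gamma> \<xi>) x + skew_coeff \<Gamma> \<xi> x * phi \<Gamma> b x) q"
    by (rule pd_cong_open[OF U_open assms]) (simp add: Bop_killing B_killing_formula_def)
  then show ?thesis using differentiable_data[OF assms] by (simp add: pd_add pd_mult)
qed

lemma Dop_Bop_killing: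
  assumes "q \<in> U"
  shows "Dop \<Gamma> (Bop \<Gamma> (killing \<Gamma> \<xi>)) q = (\<Sum>k\<in>UNIV. \<xi> k q * wvec \<Gamma> k q) / 2 - 2 * skew_coeff \<Gamma> \<xi> q"
proof (rule Dop_eqI[OF assms])
  define f r where "f = skew_coeff \<Gamma> \<xi>" and "r = ricci \<Gamma> 1 2 q"
  have "pd 1 (pd 2 f) q = pd 2 (pd 1 f) q"
    using pd_commute[OF U_open assms smooth_on_skew_coeff] f_def by simp
  then have "dform (Bop \<Gamma> (killing \<Gamma> \<xi>)) 1 2 q
      = dform \<xi> 1 2 q + pd 1 f q * phi \<Gamma> 2 q - pd 2 f q * phi \<Gamma> 1 q + f q * dform (phi \<Gamma>) 1 2 q"
    unfolding dform_def pd_Bop_killing[OF assms] f_def by (simp add: algebra_simps)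
  also have "\<dots> = pd 1 f q * phi \<Gamma> 2 q - pd 2 f q * phi \<Gamma> 1 q + 4 * f q * r"
    unfolding dform_\<xi>[OF assms] dform_phi[OF assms] f_def r_def by simp
  finally show "2 * ((\<Sum>k\<in>UNIV. \<xi> k q * wvec \<Gamma> k q) / 2 - 2 * skew_coeff \<Gamma> \<xi> q) * ricci \<Gamma> 1 2 q
      = wedge1 (Bop \<Gamma> (killing \<Gamma> \<xi>)) (phi \<Gamma>) 1 2 q - dform (Bop \<Gamma> (killing \<Gamma> \<xi>)) 1 2 q"
    unfolding wedge1_def Bop_killing[OF assms]
    by (simp add: B_killing_formula_def phi_wvec[OF assms] sum_2 f_def r_def algebra_simps)
qed

lemma cov1_eq_killing:
  assumes "q \<in> U"
  shows "cov1 \<Gamma> \<xi> i j q = killing \<Gamma> \<xi> i j q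
    + ((\<Sum>k\<in>UNIV. \<xi> k q * wvec \<Gamma> k q) - 2 * Dop \<Gamma> (Bop \<Gamma> (killing \<Gamma> \<xi>)) q) * ricci \<Gamma> i j q / 4"
  unfolding Dop_Bop_killing[OF assms] killing_eq[OF assms] by (simp add: field_simps)

lemma Qstar_eq_Zop:
  assumes "q \<in> U"
  shows "Qstar \<Gamma> \<xi> i q = Zop \<Gamma> (killing \<Gamma> \<xi>) i q"
proof -
  define f r where "f = skew_coeff \<Gamma> \<xi>" and "r = ricci \<Gamma> 1 2 q"
  have pd_Dop: "pd a (Dop \<Gamma> (Bop \<Gamma> (killing \<Gamma> \<xi>))) q
      = (pd a (\<xi> 1) q * wvec \<Gamma> 1 q + \<xi> 1 q * pd a (wvec \<Gamma> 1) q
         + (pd a (\<xi> 2) q * wvec \<Gamma> 2 q + \<xi> 2 q * pd a (wvec \<Gamma> 2) q)) / 2 - 2 * pd a f q" for a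
  proof -
    have "pd a (Dop \<Gamma> (Bop \<Gamma> (killing \<Gamma> \<xi>))) q
        = pd a (\<lambda>x. (\<xi> 1 x * wvec \<Gamma> 1 x + \<xi> 2 x * wvec \<Gamma> 2 x) / 2 - 2 * f x) q"
      by (rule pd_cong_open[OF U_open assms]) (simp add: Dop_Bop_killing sum_2 f_def)
    then show ?thesis
      using differentiable_data[OF assms] by (simp add: pd_diff pd_add pd_mult pd_divide_const pd_cmult f_def)
  qed
  have "pd 1 (\<xi> 2) q = pd 2 (\<xi> 1) q + 2 * f q * r"
    using dform_\<xi>[OF assms] by (simp add: dform_def f_def r_def)
  moreover have "ricci \<Gamma> 1 1 q = 0" "ricci \<Gamma> 2 2 q = 0" "ricci \<Gamma> 2 1 q = - r"
    using ricci_diag[OF assms] ricci_21[OF assms] r_def by auto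
  ultimately have "\<forall>i. Qstar \<Gamma> \<xi> i q = Zop \<Gamma> (killing \<Gamma> \<xi>) i q"
    unfolding forall_2 Qstar_def Zop_def covvec_def pd_Dop Dop_Bop_killing[OF assms] Bop_killing[OF assms]
      killing_eq[OF assms]
    by (simp add: sum_2 B_killing_formula_def cov1_def phi_wvec[OF assms] torsion_free[OF assms]
        f_def r_def field_simps)
  then show ?thesis by blast
qed

end

theorem lemma12p1:
  fixes U :: "pt set" and \<Gamma> :: "2 \<Rightarrow> 2 \<Rightarrow> 2 \<Rightarrow> pt \<Rightarrow> real" and \<xi> :: "2 \<Rightarrow> pt \<Rightarrow> real"
  assumes U_open: "open U"
    and \<Gamma>_smooth: "\<And>k i j. smooth_on U (\<Gamma> k i j)"
    and torsion_free: "\<And>k i j p. p \<in> U \<Longrightarrow> \<Gamma> k i j p = \<Gamma> k j i p"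
    and ricci_skew: "\<And>i j p. p \<in> U \<Longrightarrow> ricci \<Gamma> j i p = - ricci \<Gamma> i j p"
    and ricci_nonzero: "\<And>p. p \<in> U \<Longrightarrow> \<exists>i j. ricci \<Gamma> i j p \<noteq> 0"
    and \<xi>_smooth: "\<And>i. smooth_on U (\<xi> i)"
  shows "\<forall>p\<in>U. \<forall>i.
           Qstar \<Gamma> \<xi> i p = Zop \<Gamma> (killing \<Gamma> \<xi>) i p
         \<and> (\<forall>j. cov1 \<Gamma> \<xi> i j p = killing \<Gamma> \<xi> i j p
               + ((\<Sum>k\<in>UNIV. \<xi> k p * wvec \<Gamma> k p) - 2 * Dop \<Gamma> (Bop \<Gamma> (killing \<Gamma> \<xi>)) p)
                 * ricci \<Gamma> i j p / 4)"
proof -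
  interpret skew_ricci_one_form U \<Gamma> \<xi>
    using assms by unfold_locales
  show ?thesis using Qstar_eq_Zop cov1_eq_killing by blast
qed

end
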